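(* Let $n\geqslant 2$ and $d\geqslant 1$ be integers. Let $\mathfrak{ut}_n(\mathbb{C})$ be the Lie algebra of upper triangular complex $n\times n$ matrices with basis $\{E_{ij}\mid 1\leqslant i\leqslant j\leqslant n\}$, and assign the variable $x_i$ to $E_{ii}$ ($1\leqslant i\leqslant n$) and the variable $x_{ij}$ to $E_{ij}$ ($1\leqslant i<j\leqslant n$). Then the coefficient algebra of $\mathfrak{ut}_n(\mathbb{C})$ on $S^d(\mathbb{C}^n)$ with respect to this basis, a subalgebra of $\mathbb{C}[x_i,x_{ij}]$, is equal to the ring of symmetric polynomials $\mathbb{C}[x_1,\dots,x_n]^{S_n}$ in the diagonal variables, where $S_n$ permutes $x_1,\dots,x_n$. In particular it is isomorphic to $\mathbb{C}[x_1,\dots,x_n]^{S_n}$.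
   Context: Let $\mathfrak{g}$ be a finite-dimensional Lie algebra over a field $k$ with a fixed basis $\{g_1,\dots,g_N\}$, and $V$ an $m$-dimensional representation; write $[g]$ for the matrix of $g\in\mathfrak g$ acting on $V$ (in any basis of $V$). The characteristic polynomial of $\mathfrak g$ on $V$ is $\varphi_{\mathfrak g}(V)=\det(x_0 I+x_1[g_1]+\cdots+x_N[g_N])$, a polynomial in variables $x_0,\dots,x_N$ (one variable $x_0$ for the identity and one for each basis element). Writing $\varphi_{\mathfrak g}(V)=x_0^m+c_1x_0^{m-1}+\cdots+c_m$ with $c_i\in k[x_1,\dots,x_N]$, the coefficient algebra $B_{\mathfrak g}(V)$ is the $k$-subalgebra $k[c_1,\dots,c_m]$ of $k[x_1,\dots,x_N]$. Here $E_{ij}$ is the matrix unit with $1$ in position $(i,j)$ and $0$ elsewhere. $\mathbb{C}^n$ is the standard representation of $\mathfrak{gl}_n(\mathbb{C})$ (and of its subalgebras) with standard basis $e_1,\dots,e_n$, and $S^d(\mathbb{C}^n)$ is its $d$-th symmetric power, on which $g$ acts as a derivation: $g\cdot(e_{i_1}\cdots e_{i_d})=\sum_{s=1}^d e_{i_1}\cdots g(e_{i_s})\cdots e_{i_d}$. *)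

theory Defs
  imports "HOL-Library.Poly_Mapping" "HOL-Library.Multiset_Order"
    "HOL-Combinatorics.Permutations"
    "HOL-Computational_Algebra.Polynomial" "Jordan_Normal_Form.Determinant"
begin

type_synonym ('v, 'a) mpoly = "('v \<Rightarrow>\<^sub>0 nat) \<Rightarrow>\<^sub>0 'a"

definition mvar :: "'v \<Rightarrow> ('v, 'a::comm_ring_1) mpoly" where
  "mvar v = Poly_Mapping.single (Poly_Mapping.single v 1) 1"

definition mconst :: "'a::comm_ring_1 \<Rightarrow> ('v, 'a) mpoly" where
  "mconst c = Poly_Mapping.single 0 c"

inductive_set subalg_gen :: "('v, 'a::comm_ring_1) mpoly set \<Rightarrow> ('v, 'a) mpoly set"
  for S where
  const: "mconst c \<in> subalg_gen S"
| gen: "s \<in> S \<Longrightarrow> s \<in> subalg_gen S"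
| add: "p \<in> subalg_gen S \<Longrightarrow> q \<in> subalg_gen S \<Longrightarrow> p + q \<in> subalg_gen S"
| mult: "p \<in> subalg_gen S \<Longrightarrow> q \<in> subalg_gen S \<Longrightarrow> p * q \<in> subalg_gen S"

definition lie_char_poly ::
  "nat \<Rightarrow> 'v set \<Rightarrow> ('v \<Rightarrow> 'a::comm_ring_1 mat) \<Rightarrow> ('v, 'a) mpoly poly" where
  "lie_char_poly m I rep =
     det (mat m m (\<lambda>(r, s). (if r = s then [:0, 1:] else 0)
            + [: \<Sum>g\<in>I. mvar g * mconst (rep g $$ (r, s)) :]))"

text \<open>Coefficients c_1, ..., c_m of phi = x0^m + c_1 x0^(m-1) + ... + c_m.\<close>
definition coeff_algebra ::
  "nat \<Rightarrow> 'v set \<Rightarrow> ('v \<Rightarrow> 'a::comm_ring_1 mat) \<Rightarrow> ('v, 'a) mpoly set" where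
  "coeff_algebra m I rep =
     subalg_gen {coeff (lie_char_poly m I rep) (m - i) | i. 1 \<le> i \<and> i \<le> m}"

text \<open>Basis of S^d(C^n): monomials e_{i_1}...e_{i_d}, represented as multisets of size d
  over {0..<n}, listed in increasing (multiset) order.\<close>
definition sym_basis :: "nat \<Rightarrow> nat \<Rightarrow> nat multiset list" where
  "sym_basis n d = sorted_list_of_set {M. size M = d \<and> set_mset M \<subseteq> {..<n}}"

text \<open>Matrix of an n x n matrix g acting as a derivation on S^d(C^n):
  g(e_{i_1}...e_{i_d}) = sum_s e_{i_1}...g(e_{i_s})...e_{i_d}, g(e_b) = sum_a g_{ab} e_a.
  Entry (N, M) is the coefficient of basis vector N in g applied to basis vector M.\<close>
definition sym_action_entry ::
  "nat \<Rightarrow> (nat \<Rightarrow> nat \<Rightarrow> 'a::comm_ring_1) \<Rightarrow> nat multiset \<Rightarrow> nat multiset \<Rightarrow> 'a" where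
  "sym_action_entry n g N M =
     (\<Sum>b\<in>set_mset M. of_nat (count M b) *
        (\<Sum>a<n. if N = add_mset a (M - {#b#}) then g a b else 0))"

definition sym_power_mat :: "nat \<Rightarrow> nat \<Rightarrow> (nat \<Rightarrow> nat \<Rightarrow> 'a::comm_ring_1) \<Rightarrow> 'a mat" where
  "sym_power_mat n d g =
     (let B = sym_basis n d in
      mat (length B) (length B) (\<lambda>(r, s). sym_action_entry n g (B ! r) (B ! s)))"

text \<open>Matrix unit E_{ij} (indices 0-based).\<close>
definition matrix_unit :: "nat \<Rightarrow> nat \<Rightarrow> nat \<Rightarrow> nat \<Rightarrow> 'a::comm_ring_1" where
  "matrix_unit i j = (\<lambda>a b. if a = i \<and> b = j then 1 else 0)"

text \<open>Basis of ut_n: E_{ij}, i <= j < n. The variable (i,i) is x_i and (i,j), i<j, is x_ij.\<close>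
definition ut_basis :: "nat \<Rightarrow> (nat \<times> nat) set" where
  "ut_basis n = {(i, j). i \<le> j \<and> j < n}"

definition symmetric_diag_polys :: "nat \<Rightarrow> (nat \<times> nat, 'a::comm_ring_1) mpoly set" where
  "symmetric_diag_polys n =
     {p. (\<forall>\<mu>\<in>Poly_Mapping.keys p. \<forall>v\<in>Poly_Mapping.keys \<mu>. \<exists>i<n. v = (i, i)) \<and>
         (\<forall>\<sigma>. \<sigma> permutes {..<n} \<longrightarrow>
            (\<forall>\<mu>. Poly_Mapping.lookup p (Poly_Mapping.map_key (\<lambda>(i, j). (\<sigma> i, \<sigma> j)) \<mu>)
                 = Poly_Mapping.lookup p \<mu>))}"

end

theory Submission
  imports Defs
begin

(* In the basis of degree d monomials of S^d(C^n), listed in increasing multiset order, every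
   E_ij with i <= j acts by an upper triangular matrix, and E_ii acts diagonally by the
   multiplicity of the letter i.  Hence the characteristic polynomial is the product of
   x0 + w(M) over the monomials M, where w(M) = sum_a (count M a) x_a, and its coefficients are
   the elementary symmetric functions of the weights w(M).  A permutation of x_1, ..., x_n
   permutes the weights, so these coefficients are symmetric.  Conversely, Newton's identities
   produce the power sums P_k = sum_M w(M)^k.  Splitting off one factor of w(M)^k gives a
   recurrence expressing P_k through the power sums p_j = sum_a x_a^j, j <= k, in which p_k has a
   positive integer coefficient; so in characteristic 0 every p_k lies in the coefficient
   algebra, and the p_k generate all symmetric polynomials. *)

lemma mconst_0 [simp]: "mconst 0 = 0"
  by (simp add: mconst_def)

lemma mconst_1 [simp]: "mconst 1 = 1"
  by (simp add: mconst_def)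

lemma mconst_mult: "mconst (a * b) = mconst a * mconst b"
  by (simp add: mconst_def mult_single)

lemma of_nat_eq_mconst: "of_nat k = mconst (of_nat k)"
  by (simp add: mconst_def)

lemma mconst_mult_single: "mconst c * Poly_Mapping.single \<mu> 1 = Poly_Mapping.single \<mu> c"
  by (simp add: mconst_def mult_single)

lemma subalg_gen_zero: "0 \<in> subalg_gen S"
  using subalg_gen.const[of 0] by simp

lemma subalg_gen_one: "1 \<in> subalg_gen S"
  using subalg_gen.const[of 1] by simp

lemma subalg_gen_of_nat: "of_nat k \<in> subalg_gen S"
  unfolding of_nat_eq_mconst by (rule subalg_gen.const)

lemma subalg_gen_uminus: "p \<in> subalg_gen S \<Longrightarrow> - p \<in> subalg_gen S"
  using subalg_gen.mult[OF subalg_gen.const[of "-1"]]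
  by (simp add: mconst_def single_uminus)

lemma subalg_gen_diff: "p \<in> subalg_gen S \<Longrightarrow> q \<in> subalg_gen S \<Longrightarrow> p - q \<in> subalg_gen S"
  unfolding diff_conv_add_uminus by (intro subalg_gen.add subalg_gen_uminus)

lemma subalg_gen_sum: "(\<And>x. x \<in> A \<Longrightarrow> f x \<in> subalg_gen S) \<Longrightarrow> sum f A \<in> subalg_gen S"
  by (induction A rule: infinite_finite_induct) (simp_all add: subalg_gen_zero subalg_gen.add)

lemma subalg_gen_power: "p \<in> subalg_gen S \<Longrightarrow> p ^ k \<in> subalg_gen S"
  by (induction k) (simp_all add: subalg_gen_one subalg_gen.mult)

lemma subalg_gen_minimal:
  assumes "S \<subseteq> T" and "\<And>c. mconst c \<in> T"
    and "\<And>p q. p \<in> T \<Longrightarrow> q \<in> T \<Longrightarrow> p + q \<in> T"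
    and "\<And>p q. p \<in> T \<Longrightarrow> q \<in> T \<Longrightarrow> p * q \<in> T"
  shows "subalg_gen S \<subseteq> T"
proof
  show "p \<in> T" if "p \<in> subalg_gen S" for p
    using that by induction (use assms in auto)
qed

lemma subalg_gen_subset: "S \<subseteq> subalg_gen T \<Longrightarrow> subalg_gen S \<subseteq> subalg_gen T"
  by (rule subalg_gen_minimal) (auto intro: subalg_gen.intros)

(* Characteristic 0 enters only through this lemma. *)
lemma subalg_gen_of_nat_mult_cancel:
  fixes p :: "('v, 'a::field_char_0) mpoly"
  assumes "of_nat c * p \<in> subalg_gen S" and "c \<noteq> 0"
  shows "p \<in> subalg_gen S"
proof -
  have "mconst (1 / of_nat c) * (of_nat c * p) = p"
    using assms(2) by (simp add: of_nat_eq_mconst mult.assoc[symmetric] mconst_mult[symmetric])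
  with subalg_gen.mult[OF subalg_gen.const assms(1)] show ?thesis
    by metis
qed

lemma coeff_prod_linear_subalg_gen:
  assumes "\<And>x. x \<in> A \<Longrightarrow> f x \<in> subalg_gen S"
  shows "coeff (\<Prod>x\<in>A. [:f x, 1:]) i \<in> subalg_gen S"
  using assms
proof (induction A arbitrary: i rule: infinite_finite_induct)
  case (insert x A)
  then show ?case
    by (cases i) (auto simp: coeff_pCons mult_pCons_left intro!: subalg_gen.add subalg_gen.mult)
qed (auto simp: coeff_1 subalg_gen_zero subalg_gen_one)

section \<open>Newton's identities\<close>

definition newton_identities :: "(nat \<Rightarrow> 'a::comm_ring_1) \<Rightarrow> (nat \<Rightarrow> 'a) \<Rightarrow> bool" where
  "newton_identities e p \<longleftrightarrow>
     (\<forall>m. of_nat (Suc m) * e (Suc m) = (\<Sum>i\<le>m. (-1) ^ (m - i) * e i * p (Suc m - i)))"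

lemma coeff_linear_mult:
  fixes y :: "'a::comm_ring_1"
  shows "coeff ([:1, y:] * q) 0 = coeff q 0"
    and "coeff ([:1, y:] * q) (Suc i) = coeff q (Suc i) + y * coeff q i"
  by (simp_all add: mult_pCons_left coeff_pCons)

lemma alternating_sum_coeff_linear_mult:
  fixes y :: "'a::comm_ring_1"
  shows "(\<Sum>i\<le>m. (-1) ^ (m - i) * coeff ([:1, y:] * q) i * y ^ (Suc m - i)) = y * coeff q m"
proof (induction m)
  case 0
  then show ?case by (simp add: coeff_linear_mult)
next
  case (Suc m)
  have "(\<Sum>i\<le>m. (-1) ^ (Suc m - i) * coeff ([:1, y:] * q) i * y ^ (Suc (Suc m) - i))
      = - y * (\<Sum>i\<le>m. (-1) ^ (m - i) * coeff ([:1, y:] * q) i * y ^ (Suc m - i))"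
    unfolding sum_distrib_left by (intro sum.cong refl) (simp add: Suc_diff_le algebra_simps)
  then show ?case
    using Suc by (simp add: coeff_linear_mult algebra_simps)
qed

lemma newton_identities_linear_mult:
  fixes y :: "'a::comm_ring_1"
  assumes newton: "newton_identities (coeff q) p"
  shows "newton_identities (coeff ([:1, y:] * q)) (\<lambda>k. p k + y ^ k)"
  unfolding newton_identities_def
proof
  fix m
  let ?e = "coeff ([:1, y:] * q)"
  have shifted: "(\<Sum>i\<le>m. (-1) ^ (m - i) * (?e i - coeff q i) * p (Suc m - i)) = y * (of_nat m * coeff q m)"
  proof (cases m)
    case (Suc m')
    have "(\<Sum>i\<le>m. (-1) ^ (m - i) * (?e i - coeff q i) * p (Suc m - i))
        = y * (\<Sum>i\<le>m'. (-1) ^ (m' - i) * coeff q i * p (Suc m' - i))"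
      unfolding Suc sum.atMost_Suc_shift sum_distrib_left
      by (simp add: coeff_linear_mult algebra_simps)
    then show ?thesis
      using newton unfolding newton_identities_def Suc by metis
  qed (simp add: coeff_linear_mult)
  have "(\<Sum>i\<le>m. (-1) ^ (m - i) * ?e i * (p (Suc m - i) + y ^ (Suc m - i)))
      = (\<Sum>i\<le>m. (-1) ^ (m - i) * coeff q i * p (Suc m - i))
        + (\<Sum>i\<le>m. (-1) ^ (m - i) * (?e i - coeff q i) * p (Suc m - i))
        + (\<Sum>i\<le>m. (-1) ^ (m - i) * ?e i * y ^ (Suc m - i))"
    by (simp add: sum.distrib[symmetric] algebra_simps)
  also have "\<dots> = of_nat (Suc m) * coeff q (Suc m) + y * (of_nat m * coeff q m) + y * coeff q m"
    using newton unfolding shifted alternating_sum_coeff_linear_mult newton_identities_def by metis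
  also have "\<dots> = of_nat (Suc m) * ?e (Suc m)"
    by (simp add: coeff_linear_mult algebra_simps)
  finally show "of_nat (Suc m) * ?e (Suc m) = (\<Sum>i\<le>m. (-1) ^ (m - i) * ?e i * (p (Suc m - i) + y ^ (Suc m - i)))"
    by simp
qed

lemma newton_identities_prod:
  fixes f :: "'b \<Rightarrow> 'a::comm_ring_1"
  assumes "finite A"
  shows "newton_identities (coeff (\<Prod>x\<in>A. [:1, f x:])) (\<lambda>k. \<Sum>x\<in>A. f x ^ k)"
  using assms
proof (induction A rule: finite_induct)
  case empty
  show ?case unfolding newton_identities_def by simp
next
  case (insert x A)
  have "(\<Prod>x\<in>insert x A. [:1, f x:]) = [:1, f x:] * (\<Prod>x\<in>A. [:1, f x:])"
    and "(\<lambda>k. \<Sum>x\<in>insert x A. f x ^ k) = (\<lambda>k. (\<Sum>x\<in>A. f x ^ k) + f x ^ k)"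
    using insert by (simp_all add: add.commute)
  then show ?case
    using newton_identities_linear_mult[OF insert.IH] by (simp only:)
qed

lemma newton_identities_subalg_gen:
  fixes e p :: "nat \<Rightarrow> ('v, 'a::comm_ring_1) mpoly"
  assumes newton: "newton_identities e p" and "e 0 = 1"
    and e: "\<And>i. i \<ge> 1 \<Longrightarrow> e i \<in> subalg_gen S"
  shows "k \<ge> 1 \<Longrightarrow> p k \<in> subalg_gen S"
proof (induction k rule: less_induct)
  case (less k)
  then obtain m where k: "k = Suc m"
    by (cases k) auto
  define r where "r = (\<Sum>i\<in>{1..m}. (-1) ^ (m - i) * e i * p (Suc m - i))"
  have "r \<in> subalg_gen S"
    unfolding r_def using e less.IH k
    by (intro subalg_gen_sum subalg_gen.mult subalg_gen_power subalg_gen_uminus subalg_gen_one) auto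
  have "{..m} = insert 0 {1..m}"
    by auto
  then have "of_nat (Suc m) * e (Suc m) = (-1) ^ m * p (Suc m) + r"
    using newton \<open>e 0 = 1\<close> unfolding newton_identities_def r_def by simp
  then have "p (Suc m) = (-1) ^ m * (of_nat (Suc m) * e (Suc m) - r)"
    by (simp add: algebra_simps flip: power_mult_distrib)
  also have "\<dots> \<in> subalg_gen S"
    using \<open>r \<in> subalg_gen S\<close> e
    by (intro subalg_gen.mult subalg_gen_power subalg_gen_uminus subalg_gen_one subalg_gen_diff
        subalg_gen_of_nat) auto
  finally show ?case
    unfolding k .
qed

lemma coeff_prod_linear_reflect:
  fixes f :: "'b \<Rightarrow> 'a::comm_ring_1"
  assumes "finite A"
  shows "coeff (\<Prod>x\<in>A. [:1, f x:]) i = (if card A < i then 0 else coeff (\<Prod>x\<in>A. [:f x, 1:]) (card A - i))"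
  using assms
proof (induction A arbitrary: i rule: finite_induct)
  case (insert x A)
  have "degree (\<Prod>x\<in>A. [:f x, 1:]) \<le> card A"
    using degree_prod_sum_le[OF insert.hyps(1), of "\<lambda>x. [:f x, 1:]"] by simp
  then have high: "coeff (\<Prod>x\<in>A. [:f x, 1:]) j = 0" if "card A < j" for j
    using that by (intro coeff_eq_0) simp
  show ?case
    using insert high[of "Suc (card A)"]
    by (cases i) (auto simp: mult_pCons_left coeff_pCons not_less le_Suc_eq split: nat.split,
        metis Suc_diff_Suc Suc_le_lessD nat.inject)
qed (simp add: coeff_1)

section \<open>Power sums of the weights of multisets\<close>

lemma sum_multisets_of_size_count:
  assumes "finite A" and "a \<in> A"
  shows "(\<Sum>M\<in>multisets_of_size A d. \<Sum>j\<in>{1..count M a}. F M j) =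
         (\<Sum>j\<in>{1..d}. \<Sum>M\<in>multisets_of_size A (d - j). F (M + replicate_mset j a) j)"
proof -
  have "(\<Sum>M\<in>multisets_of_size A d. \<Sum>j\<in>{1..count M a}. F M j) =
        (\<Sum>(M, j)\<in>Sigma (multisets_of_size A d) (\<lambda>M. {1..count M a}). F M j)"
    using assms(1) by (intro sum.Sigma) auto
  also have "\<dots> = (\<Sum>(j, M)\<in>Sigma {1..d} (\<lambda>j. multisets_of_size A (d - j)). F (M + replicate_mset j a) j)"
  proof (rule sum.reindex_bij_witness[where j = "\<lambda>(M, j). (j, M - replicate_mset j a)"
        and i = "\<lambda>(j, M). (M + replicate_mset j a, j)"], goal_cases)
    case (1 Mj)
    then show ?case
      by (cases Mj) (auto simp: subseteq_mset_def subset_mset.diff_add)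
  next
    case (2 Mj)
    obtain M j where Mj: "Mj = (M, j)"
      by fastforce
    have "j \<le> size M"
      using 2 Mj count_le_size[of M a] by auto
    then show ?case
      using 2 Mj by (auto simp: multisets_of_size_def subseteq_mset_def size_Diff_submset dest: in_diffD)
  next
    case (5 Mj)
    then show ?case
      by (cases Mj) (auto simp: subseteq_mset_def subset_mset.diff_add)
  qed (use assms(2) in \<open>auto simp: multisets_of_size_def\<close>)
  also have "\<dots> = (\<Sum>j\<in>{1..d}. \<Sum>M\<in>multisets_of_size A (d - j). F (M + replicate_mset j a) j)"
    using assms(1) by (intro sum.Sigma[symmetric]) auto
  finally show ?thesis .
qed

lemma binomial_mult_power:
  fixes x w :: "'a::comm_ring_1"
  assumes "k \<ge> 1"
  shows "x * (w + of_nat j * x) ^ (k - 1) =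
    (\<Sum>i<k. of_nat ((k - 1) choose i) * of_nat j ^ (k - 1 - i) * w ^ i * x ^ (k - i))"
proof -
  have "x * (w + of_nat j * x) ^ (k - 1) =
      (\<Sum>i\<le>k - 1. x * (of_nat ((k - 1) choose i) * w ^ i * (of_nat j * x) ^ (k - 1 - i)))"
    by (simp add: binomial_ring sum_distrib_left)
  also have "\<dots> = (\<Sum>i\<le>k - 1. of_nat ((k - 1) choose i) * of_nat j ^ (k - 1 - i) * w ^ i * x ^ (k - i))"
  proof (intro sum.cong refl)
    fix i assume "i \<in> {..k - 1}"
    then have "k - i = Suc (k - 1 - i)"
      using assms by auto
    then show "x * (of_nat ((k - 1) choose i) * w ^ i * (of_nat j * x) ^ (k - 1 - i)) =
        of_nat ((k - 1) choose i) * of_nat j ^ (k - 1 - i) * w ^ i * x ^ (k - i)"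
      by (simp only: power_Suc power_mult_distrib ac_simps)
  qed
  also have "{..k - 1} = {..<k}"
    using assms by auto
  finally show ?thesis .
qed

context
  fixes n :: nat and X :: "nat \<Rightarrow> 'a::comm_ring_1"
begin

definition mset_weight :: "nat multiset \<Rightarrow> 'a" where
  "mset_weight M = (\<Sum>a<n. of_nat (count M a) * X a)"

definition weight_power_sum :: "nat \<Rightarrow> nat \<Rightarrow> 'a" where
  "weight_power_sum k e = (\<Sum>M\<in>multisets_of_size {..<n} e. mset_weight M ^ k)"

definition power_sum :: "nat \<Rightarrow> 'a" where
  "power_sum k = (\<Sum>a<n. X a ^ k)"

lemma mset_weight_add_replicate:
  "a < n \<Longrightarrow> mset_weight (M + replicate_mset j a) = mset_weight M + of_nat j * X a"
proof -
  assume "a < n"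
  have "mset_weight (M + replicate_mset j a) =
      (\<Sum>b<n. of_nat (count M b) * X b + (if b = a then of_nat j * X a else 0))"
    unfolding mset_weight_def by (intro sum.cong refl) (auto simp: algebra_simps)
  then show ?thesis
    using \<open>a < n\<close> by (simp add: sum.distrib mset_weight_def)
qed

lemma weight_power_sum_0: "weight_power_sum 0 e = of_nat (card (multisets_of_size {..<n} e))"
  by (simp add: weight_power_sum_def)

lemma mset_weight_power_split:
  assumes "k \<ge> 1"
  shows "mset_weight M ^ k = (\<Sum>a<n. \<Sum>j\<in>{1..count M a}. X a * mset_weight M ^ (k - 1))"
proof -
  have "mset_weight M ^ k = mset_weight M * mset_weight M ^ (k - 1)"
    using assms by (cases k) auto
  also have "\<dots> = (\<Sum>a<n. \<Sum>j\<in>{1..count M a}. X a * mset_weight M ^ (k - 1))"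
    by (subst (1) mset_weight_def) (simp add: sum_distrib_left sum_distrib_right ac_simps)
  finally show ?thesis .
qed

(* Split off one factor of the weight and sort the monomials by the multiplicity j of the
   variable that this factor contributes. *)
lemma weight_power_sum_recurrence:
  assumes "k \<ge> 1"
  shows "weight_power_sum k d = (\<Sum>j\<in>{1..d}. \<Sum>i<k.
           of_nat ((k - 1) choose i) * of_nat j ^ (k - 1 - i) * weight_power_sum i (d - j) * power_sum (k - i))"
proof -
  let ?W = "multisets_of_size {..<n}"
  let ?c = "\<lambda>i j. of_nat ((k - 1) choose i) * of_nat j ^ (k - 1 - i)"
  have "weight_power_sum k d = (\<Sum>M\<in>?W d. \<Sum>a<n. \<Sum>j\<in>{1..count M a}. X a * mset_weight M ^ (k - 1))"
    unfolding weight_power_sum_def mset_weight_power_split[OF assms] ..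
  also have "\<dots> = (\<Sum>a<n. \<Sum>j\<in>{1..d}. \<Sum>M\<in>?W (d - j). X a * mset_weight (M + replicate_mset j a) ^ (k - 1))"
    by (subst sum.swap) (intro sum.cong refl sum_multisets_of_size_count; simp)
  also have "\<dots> = (\<Sum>a<n. \<Sum>j\<in>{1..d}. \<Sum>i<k. ?c i j * weight_power_sum i (d - j) * X a ^ (k - i))"
  proof (intro sum.cong refl)
    fix a j assume "a \<in> {..<n}"
    then have "(\<Sum>M\<in>?W (d - j). X a * mset_weight (M + replicate_mset j a) ^ (k - 1)) =
        (\<Sum>M\<in>?W (d - j). \<Sum>i<k. ?c i j * mset_weight M ^ i * X a ^ (k - i))"
      by (simp only: lessThan_iff mset_weight_add_replicate binomial_mult_power[OF assms])
    also have "\<dots> = (\<Sum>i<k. ?c i j * weight_power_sum i (d - j) * X a ^ (k - i))"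
      unfolding weight_power_sum_def sum_distrib_left sum_distrib_right by (rule sum.swap)
    finally show "(\<Sum>M\<in>?W (d - j). X a * mset_weight (M + replicate_mset j a) ^ (k - 1)) =
        (\<Sum>i<k. ?c i j * weight_power_sum i (d - j) * X a ^ (k - i))" .
  qed
  also have "\<dots> = (\<Sum>j\<in>{1..d}. \<Sum>i<k. ?c i j * weight_power_sum i (d - j) * power_sum (k - i))"
    unfolding power_sum_def sum_distrib_left
    by (subst sum.swap) (intro sum.cong refl sum.swap)
  finally show ?thesis .
qed

end

lemma weight_power_sum_subalg_gen:
  fixes X :: "nat \<Rightarrow> ('v, 'a::comm_ring_1) mpoly"
  assumes "\<And>s. 1 \<le> s \<Longrightarrow> s < k \<Longrightarrow> power_sum n X s \<in> subalg_gen S"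
  shows "i < k \<Longrightarrow> weight_power_sum n X i e \<in> subalg_gen S"
proof (induction i arbitrary: e rule: less_induct)
  case (less i)
  show ?case
  proof (cases "i = 0")
    case True
    then show ?thesis
      by (simp add: weight_power_sum_0 subalg_gen_of_nat)
  next
    case False
    then have "i \<ge> 1"
      by simp
    then show ?thesis
      unfolding weight_power_sum_recurrence[OF \<open>i \<ge> 1\<close>] using less assms
      by (intro subalg_gen_sum subalg_gen.mult subalg_gen_of_nat subalg_gen_power) auto
  qed
qed

(* Solve the recurrence for the highest power sum: it occurs with a positive integer
   coefficient. *)
lemma power_sum_subalg_gen:
  fixes X :: "nat \<Rightarrow> ('v, 'a::field_char_0) mpoly"
  assumes weight_sums: "\<And>k. k \<ge> 1 \<Longrightarrow> weight_power_sum n X k d \<in> subalg_gen S" and "d \<ge> 1"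
  shows "k \<ge> 1 \<Longrightarrow> power_sum n X k \<in> subalg_gen S"
proof (induction k rule: less_induct)
  case (less k)
  define c where "c = (\<Sum>j\<in>{1..d}. j ^ (k - 1) * card (multisets_of_size {..<n} (d - j)))"
  define r where "r = (\<Sum>j\<in>{1..d}. \<Sum>i\<in>{1..<k}. of_nat ((k - 1) choose i) * of_nat j ^ (k - 1 - i) *
                          weight_power_sum n X i (d - j) * power_sum n X (k - i))"
  have "r \<in> subalg_gen S"
    unfolding r_def using less.IH
    by (intro subalg_gen_sum subalg_gen.mult subalg_gen_of_nat subalg_gen_power
        weight_power_sum_subalg_gen[of k]) auto
  have "{..<k} = insert 0 {1..<k}"
    using less.prems by auto
  then have "weight_power_sum n X k d = of_nat c * power_sum n X k + r"
    unfolding weight_power_sum_recurrence[OF less.prems] c_def r_def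
    by (simp add: weight_power_sum_0 sum.distrib sum_distrib_right)
  then have "of_nat c * power_sum n X k = weight_power_sum n X k d - r"
    by simp
  also have "\<dots> \<in> subalg_gen S"
    using weight_sums[OF less.prems] \<open>r \<in> subalg_gen S\<close> by (rule subalg_gen_diff)
  finally have "of_nat c * power_sum n X k \<in> subalg_gen S" .
  moreover have "c \<noteq> 0"
  proof -
    have "d ^ (k - 1) * card (multisets_of_size {..<n} (d - d)) \<le> c"
      unfolding c_def using \<open>d \<ge> 1\<close> by (intro member_le_sum) auto
    moreover have "d ^ (k - 1) \<ge> 1"
      using \<open>d \<ge> 1\<close> by (rule one_le_power)
    ultimately show ?thesis
      by simp
  qed
  ultimately show ?case
    by (rule subalg_gen_of_nat_mult_cancel)
qed

section \<open>The characteristic polynomial of the upper triangular matrices on symmetric powers\<close>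

lemma sym_basis_eq: "sym_basis n d = sorted_list_of_set (multisets_of_size {..<n} d)"
  by (simp add: sym_basis_def multisets_of_size_def conj_commute)

lemma set_sym_basis: "set (sym_basis n d) = multisets_of_size {..<n} d"
  and distinct_sym_basis: "distinct (sym_basis n d)"
  and length_sym_basis: "length (sym_basis n d) = card (multisets_of_size {..<n} d)"
  by (simp_all add: sym_basis_eq finite_multisets_of_size)

lemma sym_basis_nth_less: "s < r \<Longrightarrow> r < length (sym_basis n d) \<Longrightarrow> sym_basis n d ! s < sym_basis n d ! r"
  unfolding sym_basis_def using strict_sorted_list_of_set by (rule sorted_wrt_nth_less)

lemma sum_matrix_unit_column:
  assumes "i < n"
  shows "(\<Sum>a<n. if N = add_mset a K then (matrix_unit i j a b :: 'a::comm_ring_1) else 0)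
      = (if b = j \<and> N = add_mset i K then 1 else 0)"
proof -
  have "(\<Sum>a<n. if N = add_mset a K then (matrix_unit i j a b :: 'a) else 0)
     = (\<Sum>a<n. if a = i then (if b = j \<and> N = add_mset i K then 1 else 0) else 0)"
    by (intro sum.cong refl) (auto simp: matrix_unit_def)
  then show ?thesis
    using assms by simp
qed

lemma sym_action_entry_matrix_unit:
  assumes "i < n"
  shows "sym_action_entry n (matrix_unit i j) N M =
     (if j \<in># M \<and> N = add_mset i (M - {#j#}) then (of_nat (count M j) :: 'a::comm_ring_1) else 0)"
proof -
  have "sym_action_entry n (matrix_unit i j) N M =
      (\<Sum>b\<in>set_mset M. of_nat (count M b) * (if b = j \<and> N = add_mset i (M - {#b#}) then 1 else 0))"
    unfolding sym_action_entry_def by (simp only: sum_matrix_unit_column[OF assms])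
  also have "\<dots> = (\<Sum>b\<in>set_mset M.
      if b = j then (if N = add_mset i (M - {#j#}) then of_nat (count M j) else 0) else 0)"
    by (intro sum.cong refl) auto
  also have "\<dots> = (if j \<in># M \<and> N = add_mset i (M - {#j#}) then of_nat (count M j) else 0)"
    by (simp add: sum.delta)
  finally show ?thesis .
qed

(* Replacing a letter j of a monomial by a letter i <= j does not increase it in the multiset
   order, so in the increasingly sorted basis all these matrices are upper triangular. *)
lemma sym_action_entry_matrix_unit_below_diag:
  assumes "i \<le> j" "j < n" "M < N"
  shows "sym_action_entry n (matrix_unit i j) N M = (0 :: 'a::comm_ring_1)"
proof -
  have "N \<noteq> add_mset i (M - {#j#})" if "j \<in># M"
  proof (cases "i = j")
    case False
    with assms(1) have "add_mset i (M - {#j#}) < add_mset j (M - {#j#})"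
      by (intro add_mset_lt_left_lt) simp
    then show ?thesis
      using that assms(3) by (auto simp: insert_DiffM)
  qed (use that assms(3) in \<open>auto simp: insert_DiffM\<close>)
  then show ?thesis
    using assms by (auto simp: sym_action_entry_matrix_unit)
qed

lemma sym_action_entry_matrix_unit_diag:
  assumes "i \<le> j" "j < n"
  shows "sym_action_entry n (matrix_unit i j) M M = (if i = j then of_nat (count M i) else (0 :: 'a::comm_ring_1))"
proof (cases "i = j")
  case True
  then show ?thesis
    using assms by (cases "j \<in># M") (auto simp: sym_action_entry_matrix_unit not_in_iff)
next
  case False
  then have "M \<noteq> add_mset i (M - {#j#})"
    by (metis count_add_mset count_diff count_single n_not_Suc_n diff_zero)
  then show ?thesis
    using assms False by (simp add: sym_action_entry_matrix_unit)
qed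

lemma finite_ut_basis: "finite (ut_basis n)"
  by (rule finite_subset[of _ "{..<n} \<times> {..<n}"]) (auto simp: ut_basis_def)

lemma sum_ut_basis_diag:
  assumes "\<And>i j. (i, j) \<in> ut_basis n \<Longrightarrow> i \<noteq> j \<Longrightarrow> F (i, j) = 0"
  shows "(\<Sum>g\<in>ut_basis n. F g) = (\<Sum>a<n. F (a, a))"
proof -
  have "(\<Sum>g\<in>ut_basis n. F g) = (\<Sum>g\<in>(\<lambda>a. (a, a)) ` {..<n}. F g)"
    using assms by (intro sum.mono_neutral_right finite_ut_basis) (auto simp: ut_basis_def)
  also have "\<dots> = (\<Sum>a<n. F (a, a))"
    by (subst sum.reindex) (auto simp: inj_on_def)
  finally show ?thesis .
qed

abbreviation diag_var :: "nat \<Rightarrow> (nat \<times> nat, 'a::comm_ring_1) mpoly" where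
  "diag_var a \<equiv> mvar (a, a)"

abbreviation diag_vars :: "nat \<Rightarrow> (nat \<times> nat) set" where
  "diag_vars n \<equiv> (\<lambda>i. (i, i)) ` {..<n}"

lemma lie_char_poly_upper_triangular:
  assumes "\<And>g r s. g \<in> I \<Longrightarrow> s < r \<Longrightarrow> r < m \<Longrightarrow> rep g $$ (r, s) = 0"
  shows "lie_char_poly m I rep = (\<Prod>r<m. [:\<Sum>g\<in>I. mvar g * mconst (rep g $$ (r, r)), 1:])"
proof -
  define A where "A = mat m m (\<lambda>(r, s). (if r = s then [:0, 1:] else 0)
      + [:\<Sum>g\<in>I. mvar g * mconst (rep g $$ (r, s)):])"
  have "upper_triangular A"
    unfolding upper_triangular_def A_def using assms by (auto intro!: sum.neutral)
  then have "lie_char_poly m I rep = prod_list (diag_mat A)"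
    unfolding lie_char_poly_def A_def[symmetric] by (rule det_upper_triangular[where n = m]) (simp add: A_def)
  also have "\<dots> = (\<Prod>r<m. [:\<Sum>g\<in>I. mvar g * mconst (rep g $$ (r, r)), 1:])"
    by (simp add: prod.list_conv_set_nth diag_mat_def A_def atLeast0LessThan)
  finally show ?thesis .
qed

lemma lie_char_poly_ut_sym_power:
  "lie_char_poly (length (sym_basis n d)) (ut_basis n)
     (\<lambda>(i, j). sym_power_mat n d (matrix_unit i j) :: 'a::comm_ring_1 mat)
   = (\<Prod>M\<in>multisets_of_size {..<n} d. [:mset_weight n diag_var M, 1:])"
  (is "lie_char_poly ?m _ ?rep = _")
proof -
  let ?B = "sym_basis n d"
  have rep: "sym_power_mat n d (matrix_unit i j) $$ (r, s) = sym_action_entry n (matrix_unit i j) (?B ! r) (?B ! s)"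
    if "r < ?m" "s < ?m" for i j r s
    using that by (simp add: sym_power_mat_def Let_def)
  have "lie_char_poly ?m (ut_basis n) ?rep =
      (\<Prod>r<?m. [:\<Sum>g\<in>ut_basis n. mvar g * mconst (?rep g $$ (r, r)), 1:])"
    by (rule lie_char_poly_upper_triangular)
      (auto simp: rep ut_basis_def sym_basis_nth_less sym_action_entry_matrix_unit_below_diag)
  also have "\<dots> = (\<Prod>r<?m. [:mset_weight n diag_var (?B ! r), 1:])"
  proof (intro prod.cong refl arg_cong2[where f = pCons])
    fix r assume "r \<in> {..<?m}"
    then have "(\<Sum>g\<in>ut_basis n. mvar g * mconst (?rep g $$ (r, r))) =
        (\<Sum>a<n. mvar (a, a) * mconst (?rep (a, a) $$ (r, r)))"
      by (intro sum_ut_basis_diag) (auto simp: rep sym_action_entry_matrix_unit_diag ut_basis_def)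
    also have "\<dots> = mset_weight n diag_var (?B ! r)"
      unfolding mset_weight_def using \<open>r \<in> {..<?m}\<close>
      by (intro sum.cong refl) (simp add: rep sym_action_entry_matrix_unit_diag of_nat_eq_mconst mult.commute)
    finally show "(\<Sum>g\<in>ut_basis n. mvar g * mconst (?rep g $$ (r, r))) = mset_weight n diag_var (?B ! r)" .
  qed
  also have "\<dots> = (\<Prod>M\<in>multisets_of_size {..<n} d. [:mset_weight n diag_var M, 1:])"
    using bij_betw_nth[OF distinct_sym_basis refl set_sym_basis[symmetric]]
    by (rule prod.reindex_bij_betw[where g = "\<lambda>M. [:mset_weight n diag_var M, 1:]"])
  finally show ?thesis .
qed

lemma poly_mapping_sum_single: "(\<Sum>\<mu>\<in>Poly_Mapping.keys p. Poly_Mapping.single \<mu> (Poly_Mapping.lookup p \<mu>)) = p"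
proof (rule poly_mapping_eqI)
  fix k
  have "Poly_Mapping.lookup (\<Sum>\<mu>\<in>Poly_Mapping.keys p. Poly_Mapping.single \<mu> (Poly_Mapping.lookup p \<mu>)) k
      = (\<Sum>\<mu>\<in>Poly_Mapping.keys p. if \<mu> = k then Poly_Mapping.lookup p \<mu> else 0)"
    unfolding lookup_sum lookup_single by (intro sum.cong refl) (auto simp: when_def)
  also have "\<dots> = Poly_Mapping.lookup p k"
    by (simp add: in_keys_iff)
  finally show "Poly_Mapping.lookup (\<Sum>\<mu>\<in>Poly_Mapping.keys p. Poly_Mapping.single \<mu> (Poly_Mapping.lookup p \<mu>)) k
      = Poly_Mapping.lookup p k" .
qed

lemma map_key_inv_map_key:
  assumes "bij \<rho>"
  shows "Poly_Mapping.map_key (inv_into UNIV \<rho>) (Poly_Mapping.map_key \<rho> \<mu>) = \<mu>"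
    and "Poly_Mapping.map_key \<rho> (Poly_Mapping.map_key (inv_into UNIV \<rho>) \<nu>) = \<nu>"
proof -
  have "inv_into UNIV \<rho> \<circ> \<rho> = id" "\<rho> \<circ> inv_into UNIV \<rho> = id"
    using assms by (simp_all add: bij_is_inj bij_is_surj flip: inj_iff surj_iff)
  then show "Poly_Mapping.map_key (inv_into UNIV \<rho>) (Poly_Mapping.map_key \<rho> \<mu>) = \<mu>"
    and "Poly_Mapping.map_key \<rho> (Poly_Mapping.map_key (inv_into UNIV \<rho>) \<nu>) = \<nu>"
    using assms bij_imp_bij_inv[OF assms]
    by (simp_all add: map_key_compose bij_is_inj map_key_id[folded id_def])
qed

lemma bij_map_key:
  assumes "bij \<rho>"
  shows "bij (Poly_Mapping.map_key \<rho>)"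
  by (rule o_bij[where g = "Poly_Mapping.map_key (inv_into UNIV \<rho>)"])
    (simp_all add: fun_eq_iff map_key_inv_map_key[OF assms])

(* The coefficient of the monomial mu in rename_vars rho p is that of mu o rho in p: the
   variable v is replaced by rho v. *)
definition rename_vars :: "('v \<Rightarrow> 'v) \<Rightarrow> ('v, 'a::comm_ring_1) mpoly \<Rightarrow> ('v, 'a) mpoly" where
  "rename_vars \<rho> p = Poly_Mapping.map_key (Poly_Mapping.map_key \<rho>) p"

context
  fixes \<rho> :: "'v \<Rightarrow> 'v"
  assumes bij: "bij \<rho>"
begin

lemma lookup_rename_vars:
  "Poly_Mapping.lookup (rename_vars \<rho> p) \<mu> = Poly_Mapping.lookup p (Poly_Mapping.map_key \<rho> \<mu>)"
proof -
  have "inj (Poly_Mapping.map_key \<rho> :: ('v \<Rightarrow>\<^sub>0 nat) \<Rightarrow> _)"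
    using bij by (intro bij_is_inj bij_map_key)
  then show ?thesis
    unfolding rename_vars_def by (simp add: map_key.rep_eq)
qed

lemma rename_vars_single:
  "rename_vars \<rho> (Poly_Mapping.single \<mu> c) = Poly_Mapping.single (Poly_Mapping.map_key (inv_into UNIV \<rho>) \<mu>) c"
  by (rule poly_mapping_eqI)
    (auto simp: lookup_rename_vars lookup_single when_def map_key_inv_map_key[OF bij])

lemma rename_vars_mvar: "rename_vars \<rho> (mvar v) = mvar (\<rho> v)"
proof -
  have "Poly_Mapping.map_key (inv_into UNIV \<rho>) (Poly_Mapping.single (inv_into UNIV \<rho> (\<rho> v)) 1) =
      Poly_Mapping.single (\<rho> v) (1::nat)"
    using bij_imp_bij_inv[OF bij] by (intro map_key_single bij_is_inj)
  then show ?thesis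
    using bij by (simp add: mvar_def rename_vars_single bij_is_inj)
qed

lemma rename_vars_mconst: "rename_vars \<rho> (mconst c) = mconst c"
  using bij_imp_bij_inv[OF bij] by (simp add: mconst_def rename_vars_single bij_is_inj)

lemma rename_vars_add: "rename_vars \<rho> (p + q) = rename_vars \<rho> p + rename_vars \<rho> q"
  by (rule poly_mapping_eqI) (simp add: lookup_rename_vars lookup_add)

lemma rename_vars_mult: "rename_vars \<rho> (p * q) = rename_vars \<rho> p * rename_vars \<rho> q"
proof (rule poly_mapping_eqI)
  fix k
  let ?g = "Poly_Mapping.map_key \<rho> :: ('v \<Rightarrow>\<^sub>0 nat) \<Rightarrow> _"
  have g: "bij ?g" "inj ?g" "\<And>a b. ?g (a + b) = ?g a + ?g b"
    using bij by (simp_all add: bij_map_key bij_is_inj map_key_plus)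
  have reindex: "Sum_any F = (\<Sum>l. F (?g l))" for F :: "_ \<Rightarrow> 'a"
    by (rule Sum_any.reindex_cong[OF g(1)]) (simp add: comp_def)
  have "Poly_Mapping.lookup (p * q) (?g k) =
      (\<Sum>l. Poly_Mapping.lookup p (?g l) * (\<Sum>m. Poly_Mapping.lookup q m when ?g k = ?g l + m))"
    unfolding lookup_mult by (rule reindex)
  also have "\<dots> = (\<Sum>l. Poly_Mapping.lookup p (?g l) *
      (\<Sum>m. Poly_Mapping.lookup q (?g m) when ?g k = ?g l + ?g m))"
    by (rule Sum_any.cong) (subst reindex, rule refl)
  also have "\<dots> = (\<Sum>l. Poly_Mapping.lookup p (?g l) * (\<Sum>m. Poly_Mapping.lookup q (?g m) when k = l + m))"
    by (simp only: g(3)[symmetric] inj_eq[OF g(2)])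
  finally show "Poly_Mapping.lookup (rename_vars \<rho> (p * q)) k =
      Poly_Mapping.lookup (rename_vars \<rho> p * rename_vars \<rho> q) k"
    by (simp add: lookup_rename_vars lookup_mult)
qed

lemma comm_ring_hom_rename_vars: "comm_ring_hom (rename_vars \<rho>)"
  using rename_vars_mconst[of 0] rename_vars_mconst[of 1]
  by unfold_locales (simp_all add: rename_vars_add rename_vars_mult)

end

context comm_ring_hom
begin

lemma hom_coeff_prod_linear: "hom (coeff (\<Prod>x\<in>A. [:f x, 1:]) i) = coeff (\<Prod>x\<in>A. [:hom (f x), 1:]) i"
proof (induction A arbitrary: i rule: infinite_finite_induct)
  case (insert x A)
  then show ?case
    by (cases i) (simp_all add: coeff_pCons mult_pCons_left hom_distribs)
qed (simp_all add: coeff_1)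

end

section \<open>Symmetric polynomials in the diagonal variables\<close>

definition mpolys_over :: "'v set \<Rightarrow> ('v, 'a::comm_ring_1) mpoly set" where
  "mpolys_over V = {p. \<forall>\<mu>\<in>Poly_Mapping.keys p. Poly_Mapping.keys \<mu> \<subseteq> V}"

lemma subalg_gen_mpolys_over:
  assumes "S \<subseteq> mpolys_over V"
  shows "subalg_gen S \<subseteq> mpolys_over V"
proof (rule subalg_gen_minimal[OF assms])
  show "mconst c \<in> mpolys_over V" for c
    by (simp add: mpolys_over_def mconst_def)
  show "p + q \<in> mpolys_over V" if "p \<in> mpolys_over V" "q \<in> mpolys_over V" for p q
    using that keys_add[of p q] by (auto simp: mpolys_over_def)
  show "p * q \<in> mpolys_over V" if "p \<in> mpolys_over V" "q \<in> mpolys_over V" for p q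
  proof (unfold mpolys_over_def, intro CollectI ballI)
    fix \<mu> assume "\<mu> \<in> Poly_Mapping.keys (p * q)"
    then obtain a b where "\<mu> = a + b" "a \<in> Poly_Mapping.keys p" "b \<in> Poly_Mapping.keys q"
      using keys_mult[of p q] by blast
    then show "Poly_Mapping.keys \<mu> \<subseteq> V"
      using that keys_add[of a b] unfolding mpolys_over_def by blast
  qed
qed

lemma mset_weight_mpolys_over:
  "mset_weight n diag_var M \<in> mpolys_over (diag_vars n)"
proof -
  have "mset_weight n diag_var M \<in> subalg_gen (mpolys_over (diag_vars n))"
    unfolding mset_weight_def
    by (intro subalg_gen_sum subalg_gen.mult subalg_gen_of_nat subalg_gen.gen)
      (auto simp: mpolys_over_def mvar_def)
  then show ?thesis
    using subalg_gen_mpolys_over by blast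
qed

lemma bij_map_prod_permutes: "\<sigma> permutes A \<Longrightarrow> bij (map_prod \<sigma> \<sigma>)"
  using bij_betw_map_prod[of \<sigma> UNIV UNIV \<sigma> UNIV UNIV] by (simp add: permutes_bij)

lemma symmetric_diag_polys_iff:
  "p \<in> symmetric_diag_polys n \<longleftrightarrow> p \<in> mpolys_over (diag_vars n) \<and>
     (\<forall>\<sigma>. \<sigma> permutes {..<n} \<longrightarrow> rename_vars (map_prod \<sigma> \<sigma>) p = p)"
proof -
  have "(\<forall>\<mu>. Poly_Mapping.lookup p (Poly_Mapping.map_key (map_prod \<sigma> \<sigma>) \<mu>) = Poly_Mapping.lookup p \<mu>)
      \<longleftrightarrow> rename_vars (map_prod \<sigma> \<sigma>) p = p" if "\<sigma> permutes {..<n}" for \<sigma>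
    by (simp add: lookup_rename_vars[OF bij_map_prod_permutes[OF that]]
        poly_mapping_eq_iff fun_eq_iff)
  moreover have "(\<forall>v\<in>Poly_Mapping.keys \<mu>. \<exists>i<n. v = (i, i)) \<longleftrightarrow>
      Poly_Mapping.keys \<mu> \<subseteq> diag_vars n"
    for \<mu> :: "nat \<times> nat \<Rightarrow>\<^sub>0 nat"
    by blast
  ultimately show ?thesis
    unfolding symmetric_diag_polys_def mpolys_over_def map_prod_def by auto
qed

lemma subalg_gen_symmetric_diag_polys:
  assumes "S \<subseteq> symmetric_diag_polys n"
  shows "subalg_gen S \<subseteq> symmetric_diag_polys n"
proof (rule subalg_gen_minimal[OF assms])
  have closed: "subalg_gen (symmetric_diag_polys n) \<subseteq> mpolys_over (diag_vars n)"
    by (rule subalg_gen_mpolys_over) (auto simp: symmetric_diag_polys_iff)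
  show "mconst c \<in> symmetric_diag_polys n" for c
    using closed subalg_gen.const
    by (auto simp: symmetric_diag_polys_iff rename_vars_mconst bij_map_prod_permutes)
  show "p + q \<in> symmetric_diag_polys n" if "p \<in> symmetric_diag_polys n" "q \<in> symmetric_diag_polys n" for p q
    using that closed subalg_gen.add[OF subalg_gen.gen subalg_gen.gen, of p _ q]
    by (auto simp: symmetric_diag_polys_iff rename_vars_add bij_map_prod_permutes)
  show "p * q \<in> symmetric_diag_polys n" if "p \<in> symmetric_diag_polys n" "q \<in> symmetric_diag_polys n" for p q
    using that closed subalg_gen.mult[OF subalg_gen.gen subalg_gen.gen, of p _ q]
    by (auto simp: symmetric_diag_polys_iff rename_vars_mult bij_map_prod_permutes)
qed

lemma bij_betw_image_mset_multisets_of_size: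
  assumes "\<sigma> permutes A"
  shows "bij_betw (image_mset \<sigma>) (multisets_of_size A d) (multisets_of_size A d)"
proof -
  have image: "image_mset \<tau> M \<in> multisets_of_size A d"
    if "\<tau> permutes A" "M \<in> multisets_of_size A d" for \<tau> M
    using that permutes_image[OF that(1)] by (auto simp: multisets_of_size_def)
  show ?thesis
    by (rule bij_betw_byWitness[where f' = "image_mset (inv_into UNIV \<sigma>)"])
      (use assms permutes_inv[OF assms] in \<open>auto simp: multiset.map_comp permutes_inv_o image\<close>)
qed

lemma rename_vars_mset_weight:
  assumes "\<sigma> permutes {..<n}"
  shows "rename_vars (map_prod \<sigma> \<sigma>) (mset_weight n diag_var M) = mset_weight n diag_var (image_mset \<sigma> M)"
proof -
  interpret comm_ring_hom "rename_vars (map_prod \<sigma> \<sigma>)"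
    using assms by (intro comm_ring_hom_rename_vars bij_map_prod_permutes)
  have "inj \<sigma>"
    using assms by (rule permutes_inj)
  then have count: "count (image_mset \<sigma> M) (\<sigma> a) = count M a" for a
    by (induction M) (auto simp: inj_eq)
  have "rename_vars (map_prod \<sigma> \<sigma>) (mset_weight n diag_var M) =
      (\<Sum>a<n. of_nat (count (image_mset \<sigma> M) (\<sigma> a)) * diag_var (\<sigma> a))"
    unfolding mset_weight_def count
    using assms by (simp add: hom_sum hom_mult hom_of_nat rename_vars_mvar bij_map_prod_permutes)
  also have "\<dots> = (\<Sum>b\<in>\<sigma> ` {..<n}. of_nat (count (image_mset \<sigma> M) b) * diag_var b)"
    by (simp add: sum.reindex inj_on_subset[OF \<open>inj \<sigma>\<close>])
  also have "\<sigma> ` {..<n} = {..<n}"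
    using assms by (rule permutes_image)
  finally show ?thesis
    unfolding mset_weight_def .
qed

lemma coeff_prod_weights_symmetric:
  "coeff (\<Prod>M\<in>multisets_of_size {..<n} d. [:mset_weight n diag_var M, 1:]) i \<in> symmetric_diag_polys n"
  (is "coeff (\<Prod>M\<in>?W. ?factor M) i \<in> _")
proof (unfold symmetric_diag_polys_iff, intro conjI allI impI)
  have "coeff (\<Prod>M\<in>?W. ?factor M) i \<in> subalg_gen (mpolys_over (diag_vars n))"
    by (intro coeff_prod_linear_subalg_gen subalg_gen.gen mset_weight_mpolys_over)
  then show "coeff (\<Prod>M\<in>?W. ?factor M) i \<in> mpolys_over (diag_vars n)"
    using subalg_gen_mpolys_over[OF order_refl] by blast
  fix \<sigma> assume "\<sigma> permutes {..<n}"
  interpret comm_ring_hom "rename_vars (map_prod \<sigma> \<sigma>)"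
    using \<open>\<sigma> permutes {..<n}\<close> by (intro comm_ring_hom_rename_vars bij_map_prod_permutes)
  have "rename_vars (map_prod \<sigma> \<sigma>) (coeff (\<Prod>M\<in>?W. ?factor M) i) =
      coeff (\<Prod>M\<in>?W. ?factor (image_mset \<sigma> M)) i"
    by (simp only: hom_coeff_prod_linear rename_vars_mset_weight[OF \<open>\<sigma> permutes {..<n}\<close>])
  also have "(\<Prod>M\<in>?W. ?factor (image_mset \<sigma> M)) = (\<Prod>M\<in>?W. ?factor M)"
    using bij_betw_image_mset_multisets_of_size[OF \<open>\<sigma> permutes {..<n}\<close>]
    by (rule prod.reindex_bij_betw)
  finally show "rename_vars (map_prod \<sigma> \<sigma>) (coeff (\<Prod>M\<in>?W. ?factor M) i) = coeff (\<Prod>M\<in>?W. ?factor M) i" .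
qed

section \<open>Power sums generate the symmetric polynomials\<close>

definition distinct_lists :: "nat \<Rightarrow> nat \<Rightarrow> nat list set" where
  "distinct_lists n l = {xs. distinct xs \<and> length xs = l \<and> set xs \<subseteq> {..<n}}"

definition diag_monomial :: "nat list \<Rightarrow> nat list \<Rightarrow> (nat \<times> nat, 'a::comm_ring_1) mpoly" where
  "diag_monomial xs \<alpha> = (\<Prod>i<length \<alpha>. diag_var (xs ! i) ^ (\<alpha> ! i))"

definition augmented_monomial :: "nat \<Rightarrow> nat list \<Rightarrow> (nat \<times> nat, 'a::comm_ring_1) mpoly" where
  "augmented_monomial n \<alpha> = (\<Sum>xs\<in>distinct_lists n (length \<alpha>). diag_monomial xs \<alpha>)"

lemma finite_distinct_lists: "finite (distinct_lists n l)"
  by (rule finite_subset[of _ "{xs. set xs \<subseteq> {..<n} \<and> length xs = l}"])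
    (auto simp: distinct_lists_def finite_lists_length_eq)

lemma diag_monomial_Cons:
  "length xs = length \<alpha> \<Longrightarrow> diag_monomial (a # xs) (r # \<alpha>) = diag_var a ^ r * diag_monomial xs \<alpha>"
  unfolding diag_monomial_def length_Cons prod.lessThan_Suc_shift by simp

lemma diag_monomial_update:
  assumes "j < length \<alpha>"
  shows "diag_monomial xs (\<alpha>[j := \<alpha> ! j + r]) = diag_var (xs ! j) ^ r * diag_monomial xs \<alpha>"
proof -
  have "diag_monomial xs (\<alpha>[j := \<alpha> ! j + r]) =
      diag_var (xs ! j) ^ (\<alpha> ! j + r) * (\<Prod>i\<in>{..<length \<alpha>} - {j}. diag_var (xs ! i) ^ (\<alpha> ! i))"
    unfolding diag_monomial_def using assms by (simp add: prod.remove[of _ j] nth_list_update)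
  also have "\<dots> = diag_var (xs ! j) ^ r * diag_monomial xs \<alpha>"
    unfolding diag_monomial_def using assms by (simp add: prod.remove[of _ j] power_add ac_simps)
  finally show ?thesis .
qed

lemma sum_distinct_lists_Suc:
  "(\<Sum>xs\<in>distinct_lists n l. \<Sum>a\<in>{..<n} - set xs. g a xs) = (\<Sum>ys\<in>distinct_lists n (Suc l). g (hd ys) (tl ys))"
proof -
  have "(\<Sum>xs\<in>distinct_lists n l. \<Sum>a\<in>{..<n} - set xs. g a xs) =
      (\<Sum>(xs, a)\<in>Sigma (distinct_lists n l) (\<lambda>xs. {..<n} - set xs). g a xs)"
    by (rule sum.Sigma) (auto simp: finite_distinct_lists)
  also have "\<dots> = (\<Sum>ys\<in>distinct_lists n (Suc l). g (hd ys) (tl ys))"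
    by (rule sum.reindex_bij_witness[where j = "\<lambda>(xs, a). a # xs" and i = "\<lambda>ys. (tl ys, hd ys)"])
      (auto simp: distinct_lists_def length_Suc_conv)
  finally show ?thesis .
qed

(* The new exponent r either gets a variable of its own or is added to one of the exponents
   already present. *)
lemma power_sum_mult_augmented_monomial:
  "power_sum n diag_var r * augmented_monomial n \<alpha> =
     augmented_monomial n (r # \<alpha>) + (\<Sum>j<length \<alpha>. augmented_monomial n (\<alpha>[j := \<alpha> ! j + r]))"
proof -
  let ?l = "length \<alpha>"
  have "power_sum n diag_var r * augmented_monomial n \<alpha> =
      (\<Sum>xs\<in>distinct_lists n ?l. \<Sum>a<n. diag_var a ^ r * diag_monomial xs \<alpha>)"
    unfolding power_sum_def augmented_monomial_def sum_product by (rule sum.swap)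
  also have "\<dots> = (\<Sum>xs\<in>distinct_lists n ?l. \<Sum>a\<in>{..<n} - set xs. diag_var a ^ r * diag_monomial xs \<alpha>) +
      (\<Sum>xs\<in>distinct_lists n ?l. \<Sum>a\<in>set xs. diag_var a ^ r * diag_monomial xs \<alpha>)"
    unfolding sum.distrib[symmetric]
    by (intro sum.cong refl sum.subset_diff) (auto simp: distinct_lists_def)
  also have "(\<Sum>xs\<in>distinct_lists n ?l. \<Sum>a\<in>{..<n} - set xs. diag_var a ^ r * diag_monomial xs \<alpha>) =
      augmented_monomial n (r # \<alpha>)"
    unfolding sum_distinct_lists_Suc augmented_monomial_def
    by (intro sum.cong refl) (auto simp: distinct_lists_def length_Suc_conv diag_monomial_Cons)
  also have "(\<Sum>xs\<in>distinct_lists n ?l. \<Sum>a\<in>set xs. diag_var a ^ r * diag_monomial xs \<alpha>) =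
      (\<Sum>xs\<in>distinct_lists n ?l. \<Sum>j<?l. diag_monomial xs (\<alpha>[j := \<alpha> ! j + r]))"
  proof (rule sum.cong[OF refl])
    fix xs assume "xs \<in> distinct_lists n ?l"
    then have "set xs = (!) xs ` {..<?l}" "inj_on ((!) xs) {..<?l}"
      by (auto simp: distinct_lists_def in_set_conv_nth inj_on_def nth_eq_iff_index_eq)
    then show "(\<Sum>a\<in>set xs. diag_var a ^ r * diag_monomial xs \<alpha>) =
        (\<Sum>j<?l. diag_monomial xs (\<alpha>[j := \<alpha> ! j + r]))"
      by (simp add: sum.reindex diag_monomial_update)
  qed
  also have "\<dots> = (\<Sum>j<?l. augmented_monomial n (\<alpha>[j := \<alpha> ! j + r]))"
    unfolding augmented_monomial_def by (subst sum.swap) simp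
  finally show ?thesis .
qed

lemma augmented_monomial_subalg_gen:
  "(augmented_monomial n \<alpha> :: (nat \<times> nat, 'a::comm_ring_1) mpoly) \<in> subalg_gen {power_sum n diag_var k | k. k \<ge> 1}"
proof (induction "length \<alpha>" arbitrary: \<alpha> rule: less_induct)
  case less
  have power_sum: "power_sum n diag_var r \<in> subalg_gen {power_sum n diag_var k | k. k \<ge> 1}" for r
  proof (cases "r = 0")
    case True
    then show ?thesis
      by (simp add: power_sum_def subalg_gen_of_nat)
  next
    case False
    then show ?thesis
      by (intro subalg_gen.gen) auto
  qed
  show ?case
  proof (cases \<alpha>)
    case Nil
    moreover have "distinct_lists n 0 = {[]}"
      by (auto simp: distinct_lists_def)
    ultimately show ?thesis
      by (simp add: augmented_monomial_def diag_monomial_def subalg_gen_one)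
  next
    case (Cons r \<alpha>')
    then have "augmented_monomial n \<alpha> = power_sum n diag_var r * augmented_monomial n \<alpha>' -
        (\<Sum>j<length \<alpha>'. augmented_monomial n (\<alpha>'[j := \<alpha>' ! j + r]) :: (nat \<times> nat, 'a) mpoly)"
      by (simp add: power_sum_mult_augmented_monomial)
    also have "\<dots> \<in> subalg_gen {power_sum n diag_var k | k. k \<ge> 1}"
      using less Cons by (intro subalg_gen_diff subalg_gen.mult subalg_gen_sum power_sum) auto
    finally show ?thesis .
  qed
qed

lemma distinct_lists_permutes:
  assumes "xs \<in> distinct_lists n n"
  shows "(\<lambda>i. if i < n then xs ! i else i) permutes {..<n}"
proof (rule bij_imp_permutes)
  have "distinct xs" "length xs = n" "set xs = {..<n}"
    using assms by (auto simp: distinct_lists_def card_subset_eq distinct_card)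
  then show "bij_betw (\<lambda>i. if i < n then xs ! i else i) {..<n} {..<n}"
    unfolding bij_betw_def inj_on_def by (auto simp: nth_eq_iff_index_eq set_conv_nth image_def)
qed simp

lemma single_eq_prod_mvar_power:
  assumes "finite V" and "Poly_Mapping.keys \<mu> \<subseteq> V"
  shows "Poly_Mapping.single \<mu> 1 = (\<Prod>v\<in>V. mvar v ^ Poly_Mapping.lookup \<mu> v :: ('v, 'a::comm_ring_1) mpoly)"
proof -
  have power: "mvar v ^ k = (Poly_Mapping.single (Poly_Mapping.single v k) 1 :: ('v, 'a) mpoly)" for v k
    by (induction k) (simp_all add: mvar_def mult_single add.commute flip: single_add)
  have "(\<Prod>v\<in>V. mvar v ^ Poly_Mapping.lookup \<mu> v :: ('v, 'a) mpoly) =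
      Poly_Mapping.single (\<Sum>v\<in>V. Poly_Mapping.single v (Poly_Mapping.lookup \<mu> v)) 1"
    unfolding power using \<open>finite V\<close> by (induction V rule: finite_induct) (simp_all add: mult_single)
  also have "(\<Sum>v\<in>V. Poly_Mapping.single v (Poly_Mapping.lookup \<mu> v)) = \<mu>"
    using assms by (intro poly_mapping_eqI) (auto simp: lookup_sum lookup_single when_def in_keys_iff)
  finally show ?thesis ..
qed

lemma diag_monomial_eq_rename_vars:
  assumes xs: "xs \<in> distinct_lists n n" and \<mu>: "Poly_Mapping.keys \<mu> \<subseteq> diag_vars n"
  defines "\<sigma> \<equiv> \<lambda>i. if i < n then xs ! i else i"
  shows "diag_monomial xs (map (\<lambda>a. Poly_Mapping.lookup \<mu> (a, a)) [0..<n]) =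
    rename_vars (map_prod \<sigma> \<sigma>) (Poly_Mapping.single \<mu> 1 :: (nat \<times> nat, 'a::comm_ring_1) mpoly)"
proof -
  have "bij (map_prod \<sigma> \<sigma>)"
    using distinct_lists_permutes[OF xs] unfolding \<sigma>_def[symmetric] by (rule bij_map_prod_permutes)
  then interpret comm_ring_hom "rename_vars (map_prod \<sigma> \<sigma>) :: (nat \<times> nat, 'a) mpoly \<Rightarrow> _"
    by (rule comm_ring_hom_rename_vars)
  have "Poly_Mapping.single \<mu> 1 = (\<Prod>v\<in>diag_vars n. mvar v ^ Poly_Mapping.lookup \<mu> v :: (nat \<times> nat, 'a) mpoly)"
    using \<mu> by (intro single_eq_prod_mvar_power) auto
  also have "\<dots> = (\<Prod>i<n. diag_var i ^ Poly_Mapping.lookup \<mu> (i, i))"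
    by (simp add: prod.reindex inj_on_def)
  finally have "rename_vars (map_prod \<sigma> \<sigma>) (Poly_Mapping.single \<mu> 1 :: (nat \<times> nat, 'a) mpoly) =
      (\<Prod>i<n. diag_var (\<sigma> i) ^ Poly_Mapping.lookup \<mu> (i, i))"
    using \<open>bij (map_prod \<sigma> \<sigma>)\<close> by (simp add: hom_prod hom_power rename_vars_mvar)
  also have "\<dots> = diag_monomial xs (map (\<lambda>a. Poly_Mapping.lookup \<mu> (a, a)) [0..<n])"
    unfolding diag_monomial_def \<sigma>_def by (intro prod.cong) auto
  finally show ?thesis ..
qed

lemma symmetric_diag_poly_eq_sum_diag_monomials:
  fixes f :: "(nat \<times> nat, 'a::comm_ring_1) mpoly"
  assumes f: "f \<in> symmetric_diag_polys n" and xs: "xs \<in> distinct_lists n n"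
  shows "(\<Sum>\<mu>\<in>Poly_Mapping.keys f. mconst (Poly_Mapping.lookup f \<mu>) *
           diag_monomial xs (map (\<lambda>a. Poly_Mapping.lookup \<mu> (a, a)) [0..<n])) = f"
proof -
  define \<sigma> where "\<sigma> = (\<lambda>i. if i < n then xs ! i else i)"
  have "\<sigma> permutes {..<n}"
    unfolding \<sigma>_def using xs by (rule distinct_lists_permutes)
  then have bij: "bij (map_prod \<sigma> \<sigma>)"
    by (rule bij_map_prod_permutes)
  interpret comm_ring_hom "rename_vars (map_prod \<sigma> \<sigma>) :: (nat \<times> nat, 'a) mpoly \<Rightarrow> _"
    using bij by (rule comm_ring_hom_rename_vars)
  have "mconst (Poly_Mapping.lookup f \<mu>) * diag_monomial xs (map (\<lambda>a. Poly_Mapping.lookup \<mu> (a, a)) [0..<n]) =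
      rename_vars (map_prod \<sigma> \<sigma>) (Poly_Mapping.single \<mu> (Poly_Mapping.lookup f \<mu>))"
    if "\<mu> \<in> Poly_Mapping.keys f" for \<mu>
  proof -
    have "diag_monomial xs (map (\<lambda>a. Poly_Mapping.lookup \<mu> (a, a)) [0..<n]) =
        rename_vars (map_prod \<sigma> \<sigma>) (Poly_Mapping.single \<mu> 1 :: (nat \<times> nat, 'a) mpoly)"
      unfolding \<sigma>_def using f that
      by (intro diag_monomial_eq_rename_vars[OF xs]) (auto simp: symmetric_diag_polys_iff mpolys_over_def)
    then show ?thesis
      using bij by (simp add: mconst_mult_single[of "Poly_Mapping.lookup f \<mu>" \<mu>, symmetric]
          hom_mult rename_vars_mconst)
  qed
  then have "(\<Sum>\<mu>\<in>Poly_Mapping.keys f. mconst (Poly_Mapping.lookup f \<mu>) *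
        diag_monomial xs (map (\<lambda>a. Poly_Mapping.lookup \<mu> (a, a)) [0..<n])) =
      (\<Sum>\<mu>\<in>Poly_Mapping.keys f.
        rename_vars (map_prod \<sigma> \<sigma>) (Poly_Mapping.single \<mu> (Poly_Mapping.lookup f \<mu>)))"
    by (intro sum.cong) auto
  also have "\<dots> = rename_vars (map_prod \<sigma> \<sigma>) f"
    by (simp add: hom_sum[symmetric] poly_mapping_sum_single)
  also have "\<dots> = f"
    using f \<open>\<sigma> permutes {..<n}\<close> by (simp add: symmetric_diag_polys_iff)
  finally show ?thesis .
qed

(* Averaging a symmetric polynomial over all orderings of the variables writes it as a
   combination of augmented monomials; the number of orderings is invertible in characteristic 0. *)
lemma symmetric_diag_polys_subset_power_sums:
  "symmetric_diag_polys n \<subseteq>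
     subalg_gen {power_sum n (diag_var :: nat \<Rightarrow> (nat \<times> nat, 'a::field_char_0) mpoly) k | k. k \<ge> 1}"
proof
  fix f :: "(nat \<times> nat, 'a) mpoly"
  assume f: "f \<in> symmetric_diag_polys n"
  define exps where "exps \<mu> = map (\<lambda>a. Poly_Mapping.lookup \<mu> (a, a)) [0..<n]"
    for \<mu> :: "nat \<times> nat \<Rightarrow>\<^sub>0 nat"
  have length_exps: "length (exps \<mu>) = n" for \<mu>
    by (simp add: exps_def)
  let ?D = "distinct_lists n n"
  have "of_nat (card ?D) * f = (\<Sum>xs\<in>?D. f)"
    by simp
  also have "\<dots> = (\<Sum>\<mu>\<in>Poly_Mapping.keys f. mconst (Poly_Mapping.lookup f \<mu>) * augmented_monomial n (exps \<mu>))"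
    unfolding augmented_monomial_def sum_distrib_left length_exps
    by (subst sum.swap)
      (simp add: exps_def symmetric_diag_poly_eq_sum_diag_monomials[OF f] cong: sum.cong)
  also have "\<dots> \<in> subalg_gen {power_sum n diag_var k | k. k \<ge> 1}"
    by (intro subalg_gen_sum subalg_gen.mult subalg_gen.const augmented_monomial_subalg_gen)
  finally have "of_nat (card ?D) * f \<in> subalg_gen {power_sum n diag_var k | k. k \<ge> 1}" .
  moreover have "card ?D \<noteq> 0"
    using finite_distinct_lists[of n n]
    by (subst card_0_eq) (auto simp: distinct_lists_def intro!: exI[of _ "[0..<n]"])
  ultimately show "f \<in> subalg_gen {power_sum n diag_var k | k. k \<ge> 1}"
    by (rule subalg_gen_of_nat_mult_cancel)
qed

lemma coeff_algebra_ut_sym_power_subset: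
  "coeff_algebra (length (sym_basis n d)) (ut_basis n)
     (\<lambda>(i, j). sym_power_mat n d (matrix_unit i j) :: 'a::comm_ring_1 mat)
   \<subseteq> symmetric_diag_polys n"
  unfolding coeff_algebra_def lie_char_poly_ut_sym_power
  by (intro subalg_gen_symmetric_diag_polys) (auto intro: coeff_prod_weights_symmetric)

lemma symmetric_diag_polys_subset_coeff_algebra:
  assumes "d \<ge> 1"
  shows "symmetric_diag_polys n \<subseteq> coeff_algebra (length (sym_basis n d)) (ut_basis n)
           (\<lambda>(i, j). sym_power_mat n d (matrix_unit i j) :: 'a::field_char_0 mat)"
proof -
  let ?x = "diag_var :: nat \<Rightarrow> (nat \<times> nat, 'a) mpoly"
  let ?W = "multisets_of_size {..<n} d"
  let ?E = "\<Prod>M\<in>?W. [:1, mset_weight n ?x M:]"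
  define G where "G = {coeff (\<Prod>M\<in>?W. [:mset_weight n ?x M, 1:]) (card ?W - i) | i. 1 \<le> i \<and> i \<le> card ?W}"
  have "coeff_algebra (length (sym_basis n d)) (ut_basis n)
      (\<lambda>(i, j). sym_power_mat n d (matrix_unit i j) :: 'a mat) = subalg_gen G"
    unfolding coeff_algebra_def lie_char_poly_ut_sym_power unfolding length_sym_basis G_def ..
  moreover have elementary: "coeff ?E i \<in> subalg_gen G" if "i \<ge> 1" for i
    using that
    by (auto simp: coeff_prod_linear_reflect finite_multisets_of_size G_def subalg_gen_zero intro!: subalg_gen.gen)
  have "coeff ?E 0 = 1"
    by (simp add: poly_prod flip: poly_0_coeff_0)
  then have "weight_power_sum n ?x k d \<in> subalg_gen G" if "k \<ge> 1" for k
    unfolding weight_power_sum_def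
    using newton_identities_subalg_gen[OF newton_identities_prod[OF finite_multisets_of_size] _ elementary that]
    by simp
  then have "power_sum n ?x k \<in> subalg_gen G" if "k \<ge> 1" for k
    using assms that by (rule power_sum_subalg_gen)
  then have "subalg_gen {power_sum n ?x k | k. k \<ge> 1} \<subseteq> subalg_gen G"
    by (intro subalg_gen_subset) auto
  ultimately show ?thesis
    using symmetric_diag_polys_subset_power_sums by blast
qed

theorem theorem1p1:
  fixes n d :: nat
  assumes "n \<ge> 2" and "d \<ge> 1"
  shows "coeff_algebra (length (sym_basis n d)) (ut_basis n)
           (\<lambda>(i, j). sym_power_mat n d (matrix_unit i j) :: complex mat)
         = symmetric_diag_polys n"
proof
  show "coeff_algebra (length (sym_basis n d)) (ut_basis n)
      (\<lambda>(i, j). sym_power_mat n d (matrix_unit i j) :: complex mat) \<subseteq> symmetric_diag_polys n"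
    by (rule coeff_algebra_ut_sym_power_subset)
  show "symmetric_diag_polys n \<subseteq> coeff_algebra (length (sym_basis n d)) (ut_basis n)
      (\<lambda>(i, j). sym_power_mat n d (matrix_unit i j) :: complex mat)"
    using assms(2) by (rule symmetric_diag_polys_subset_coeff_algebra)
qed

end
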